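(* Let $N\ge2$, $J\ge2$, $M=\binom N2\binom J2$, and let $\mathbf{A}$ (an $M\times NJ$ matrix), $\mathbf{G}$ (an $NJ\times K$ matrix), $\mathbf{F}=\mathbf{A}\mathbf{G}$, and $\mathbf{d}=\mathbf{A}\mathbf{y}$ be as described in the context, with $E[\mathbf{d}]=\mathbf{F}\boldsymbol\theta$ for the effect vector $\boldsymbol\theta\in\mathbb{R}^K$. Let $\mathbf{v}\in\mathbb{R}^K$ and $\theta_e=\mathbf{v}^T\boldsymbol\theta$. Call a fixed weight vector $\mathbf{w}\in\mathbb{R}^M$ (and the estimator $\hat\theta=\mathbf{w}^T\mathbf{d}$) unbiased for $\theta_e$ if $\mathbf{F}^T\mathbf{w}=\mathbf{v}$, i.e. $E[\mathbf{w}^T\mathbf{d}]=\mathbf{v}^T\boldsymbol\theta$ for every $\boldsymbol\theta\in\mathbb{R}^K$; two weight vectors $\mathbf{w}_1,\mathbf{w}_2$ define the same estimator iff $\mathbf{A}^T\mathbf{w}_1=\mathbf{A}^T\mathbf{w}_2$. Then: (i) if $\operatorname{rank}(\mathbf{F}^T\mid\mathbf{v})>\operatorname{rank}(\mathbf{F}^T)$, there is no estimator of the form $\mathbf{w}^T\mathbf{d}$ that is unbiased for $\theta_e$; (ii) if $\operatorname{rank}(\mathbf{F}^T\mid\mathbf{v})=\operatorname{rank}(\mathbf{F}^T)=M$, there is a unique unbiased estimator of this form, given by the unique $\mathbf{w}$ solving $\mathbf{F}^T\mathbf{w}=\mathbf{v}$; (iii) if $\operatorname{rank}(\mathbf{F}^T\mid\mathbf{v})=\operatorname{rank}(\mathbf{F}^T)<M$,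 there are infinitely many weight vectors $\mathbf{w}$ giving unbiased estimators, and the set of distinct such estimators $\{\mathbf{A}^T\mathbf{w}:\mathbf{F}^T\mathbf{w}=\mathbf{v}\}$ is an affine subspace of $\mathbb{R}^{NJ}$ of dimension $(N-1)(J-1)-\operatorname{rank}(\mathbf{F})$.
   Context: Setting: $N$ units, $J$ periods, fixed treatment indicators $X_{ij}\in\{0,1\}$ with staggered adoption ($X_{ij}\le X_{i,j+1}$), $T_i=\min\{j:X_{ij}=1\}$, units ordered so $T_1\le\dots\le T_N$. $\mathbf{y}\in\mathbb{R}^{NJ}$ lists outcomes $Y_{ij}$ ordered by $i$ then $j$. The rows of $\mathbf{A}$ are indexed by quadruples $(i,i',j,j')$ with $1\le i<i'\le N$, $1\le j<j'\le J$; row $(i,i',j,j')$ has $+1$ in columns $(i,j')$ and $(i',j)$, $-1$ in columns $(i,j)$ and $(i',j')$, and $0$ elsewhere, so $\mathbf{d}$ has entries $D_{i,i',j,j'}=(Y_{ij'}-Y_{ij})-(Y_{i'j'}-Y_{i'j})$. An assumption setting assigns to each treated cell $(i,j)$ ($X_{ij}=1$) a label: S1: $(i,j,j-T_i+1)$; S2: $(j,j-T_i+1)$; S3: $j-T_i+1$; S4: $j$; S5: one common label. $\boldsymbol\theta\in\mathbb{R}^K$ lists the treatment effects for the $K$ distinct labels of treated cells; $\mathbf{G}$ has $((i,j),\ell)$ entry $1$ if $X_{ij}=1$ and cell $(i,j)$ has label $\ell$, $0$ otherwise. $(\mathbf{F}^T\mid\mathbf{v})$ denotes the augmented matrix obtained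 by appending column $\mathbf{v}$ to $\mathbf{F}^T$. *)

theory Defs
  imports "Jordan_Normal_Form.DL_Rank" "HOL-Library.Extended_Nat"
begin

text \<open>Units i = 1..N, periods j = 1..J (1-based). X i j is the treatment indicator.\<close>

definition staggered :: "nat \<Rightarrow> nat \<Rightarrow> (nat \<Rightarrow> nat \<Rightarrow> bool) \<Rightarrow> bool" where
  "staggered N J X \<longleftrightarrow> (\<forall>i\<in>{1..N}. \<forall>j\<in>{1..<J}. X i j \<longrightarrow> X i (Suc j))"

definition adopt :: "nat \<Rightarrow> (nat \<Rightarrow> nat \<Rightarrow> bool) \<Rightarrow> nat \<Rightarrow> enat" where
  "adopt J X i = (if \<exists>j\<in>{1..J}. X i j then enat (LEAST j. j \<in> {1..J} \<and> X i j) else \<infinity>)"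

definition units_ordered :: "nat \<Rightarrow> nat \<Rightarrow> (nat \<Rightarrow> nat \<Rightarrow> bool) \<Rightarrow> bool" where
  "units_ordered N J X \<longleftrightarrow> (\<forall>i\<in>{1..N}. \<forall>i'\<in>{1..N}. i \<le> i' \<longrightarrow> adopt J X i \<le> adopt J X i')"

text \<open>Adoption time as a natural number (only used for treated cells).\<close>
definition Tn :: "nat \<Rightarrow> (nat \<Rightarrow> nat \<Rightarrow> bool) \<Rightarrow> nat \<Rightarrow> nat" where
  "Tn J X i = (LEAST j. j \<in> {1..J} \<and> X i j)"

datatype setting = S1 | S2 | S3 | S4 | S5

text \<open>Labels are encoded injectively (per setting) as triples of naturals; unused
  components are 0. Note that the event time j - T_i + 1 is at least 1 on treated cells.\<close>
fun label :: "setting \<Rightarrow> nat \<Rightarrow> (nat \<Rightarrow> nat \<Rightarrow> bool) \<Rightarrow> nat \<Rightarrow> nat \<Rightarrow> nat \<times> nat \<times> nat" where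
  "label S1 J X i j = (i, j, j - Tn J X i + 1)"
| "label S2 J X i j = (0, j, j - Tn J X i + 1)"
| "label S3 J X i j = (0, 0, j - Tn J X i + 1)"
| "label S4 J X i j = (0, j, 0)"
| "label S5 J X i j = (0, 0, 0)"

definition labels :: "setting \<Rightarrow> nat \<Rightarrow> nat \<Rightarrow> (nat \<Rightarrow> nat \<Rightarrow> bool) \<Rightarrow> (nat \<times> nat \<times> nat) list" where
  "labels s N J X = remdups [label s J X i j. i \<leftarrow> [1..<Suc N], j \<leftarrow> [1..<Suc J], X i j]"

definition Kdim :: "setting \<Rightarrow> nat \<Rightarrow> nat \<Rightarrow> (nat \<Rightarrow> nat \<Rightarrow> bool) \<Rightarrow> nat" where
  "Kdim s N J X = length (labels s N J X)"

text \<open>Column index of cell (i,j), cells ordered by i then j (0-based index).\<close>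
definition cidx :: "nat \<Rightarrow> nat \<Rightarrow> nat \<Rightarrow> nat" where
  "cidx J i j = (i - 1) * J + (j - 1)"

definition quads :: "nat \<Rightarrow> nat \<Rightarrow> (nat \<times> nat \<times> nat \<times> nat) list" where
  "quads N J = [(i, i', j, j'). i \<leftarrow> [1..<Suc N], i' \<leftarrow> [Suc i..<Suc N],
                                 j \<leftarrow> [1..<Suc J], j' \<leftarrow> [Suc j..<Suc J]]"

definition Mdim :: "nat \<Rightarrow> nat \<Rightarrow> nat" where
  "Mdim N J = (N choose 2) * (J choose 2)"

definition Amat :: "nat \<Rightarrow> nat \<Rightarrow> real mat" where
  "Amat N J = mat (Mdim N J) (N * J) (\<lambda>(r, c).
     (case quads N J ! r of (i, i', j, j') \<Rightarrow>
        if c = cidx J i j' \<or> c = cidx J i' j then 1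
        else if c = cidx J i j \<or> c = cidx J i' j' then -1
        else 0))"

definition Gmat :: "setting \<Rightarrow> nat \<Rightarrow> nat \<Rightarrow> (nat \<Rightarrow> nat \<Rightarrow> bool) \<Rightarrow> real mat" where
  "Gmat s N J X = mat (N * J) (Kdim s N J X) (\<lambda>(c, l).
     (let i = c div J + 1; j = c mod J + 1 in
      if X i j \<and> label s J X i j = labels s N J X ! l then 1 else 0))"

definition Fmat :: "setting \<Rightarrow> nat \<Rightarrow> nat \<Rightarrow> (nat \<Rightarrow> nat \<Rightarrow> bool) \<Rightarrow> real mat" where
  "Fmat s N J X = Amat N J * Gmat s N J X"

definition mrank :: "real mat \<Rightarrow> nat" where
  "mrank B = vec_space.rank (dim_row B) B"

definition augment :: "real mat \<Rightarrow> real vec \<Rightarrow> real mat" where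
  "augment B v = mat_of_cols (dim_row B) (cols B @ [v])"

definition affine_subspace_of_dim :: "nat \<Rightarrow> real vec set \<Rightarrow> nat \<Rightarrow> bool" where
  "affine_subspace_of_dim n S d \<longleftrightarrow>
     (\<exists>a \<in> carrier_vec n. \<exists>W. VectorSpace.subspace class_ring W (module_vec TYPE(real) n) \<and>
        S = (\<lambda>w. a + w) ` W \<and>
        vectorspace.fin_dim class_ring ((module_vec TYPE(real) n)\<lparr>carrier := W\<rparr>) \<and>
        vectorspace.dim class_ring ((module_vec TYPE(real) n)\<lparr>carrier := W\<rparr>) = d)"

definition unbiased :: "setting \<Rightarrow> nat \<Rightarrow> nat \<Rightarrow> (nat \<Rightarrow> nat \<Rightarrow> bool) \<Rightarrow> real vec \<Rightarrow> real vec \<Rightarrow> bool" where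
  "unbiased s N J X v w \<longleftrightarrow> w \<in> carrier_vec (Mdim N J) \<and> transpose_mat (Fmat s N J X) *\<^sub>v w = v"

end

(* Unbiasedness of w means F^T w = v, so everything is linear algebra of this system.
   By Rouche-Capelli it is solvable iff appending v to F^T does not raise the rank, and its
   solution set is then w0 + ker F^T: a single point if rank F^T = M, an infinite set otherwise.
   The estimators A^T w form the affine space A^T w0 + A^T (ker F^T); as F^T = G^T A^T, the
   kernel of A^T lies in ker F^T, and rank-nullity gives the dimension rank A - rank F.
   Finally rank A = (N - 1)(J - 1): each row D_{i,i',j,j'} of A is a signed sum of four rows
   D_{1,a,1,b}, and the rows with a, b >= 2 are independent since only D_{1,a,1,b} involves
   the cell (a, b). *)

theory Submission
  imports Defs "Jordan_Normal_Form.Matrix_Kernel"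
begin

section \<open>Subspaces of real coordinate space\<close>

abbreviation subspace_vs :: "nat \<Rightarrow> real vec set \<Rightarrow> (real, real vec) module" where
  "subspace_vs n S \<equiv> (module_vec TYPE(real) n)\<lparr>carrier := S\<rparr>"

abbreviation vspan :: "nat \<Rightarrow> real vec set \<Rightarrow> real vec set" where
  "vspan n S \<equiv> LinearCombinations.module.span class_ring (module_vec TYPE(real) n) S"

definition vec_subspace :: "nat \<Rightarrow> real vec set \<Rightarrow> bool" where
  "vec_subspace n S \<longleftrightarrow> VectorSpace.subspace class_ring S (module_vec TYPE(real) n)"

definition subspace_dim :: "nat \<Rightarrow> real vec set \<Rightarrow> nat" where
  "subspace_dim n S = vectorspace.dim class_ring (subspace_vs n S)"

lemma vec_subspace_vectorspace:
  "vec_subspace n S \<Longrightarrow> vectorspace class_ring (subspace_vs n S)"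
  unfolding vec_subspace_def by (rule vectorspace.subspace_is_vs[OF vec_vs])

lemma vec_subspace_submodule:
  "vec_subspace n S \<Longrightarrow> submodule class_ring S (module_vec TYPE(real) n)"
  unfolding vec_subspace_def VectorSpace.subspace_def by auto

lemma vec_subspace_carrier: "vec_subspace n S \<Longrightarrow> S \<subseteq> carrier_vec n"
  using vec_subspace_submodule[of n S] unfolding submodule_def by (auto simp: module_vec_simps)

lemma vec_subspace_carrier_vec: "vec_subspace n (carrier_vec n)"
  unfolding vec_subspace_def VectorSpace.subspace_def submodule_def
  by (auto simp: vec_vs vec_module module_vec_simps)

lemma vec_subspace_span: "S \<subseteq> carrier_vec n \<Longrightarrow> vec_subspace n (vspan n S)"
proof -
  interpret V: vec_space "TYPE(real)" n .
  show "S \<subseteq> carrier_vec n \<Longrightarrow> vec_subspace n (V.span S)"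
    unfolding vec_subspace_def using V.span_is_subspace by simp
qed

lemma subspace_dim_carrier_vec: "subspace_dim n (carrier_vec n) = n"
proof -
  interpret V: vec_space "TYPE(real)" n .
  have "subspace_vs n (carrier_vec n) = module_vec TYPE(real) n" by (simp add: module_vec_def)
  then show ?thesis unfolding subspace_dim_def using V.dim_is_n by metis
qed

text \<open>A subspace of \<open>\<real>\<^sup>n\<close> is finite-dimensional: a maximal independent subset exists
  because independent sets have at most \<open>n\<close> elements, and it generates the subspace.\<close>
lemma vec_subspace_fin_dim:
  assumes "vec_subspace n S"
  shows "vectorspace.fin_dim class_ring (subspace_vs n S)"
proof -
  interpret V: vec_space "TYPE(real)" n .
  interpret W: vectorspace class_ring "subspace_vs n S" using vec_subspace_vectorspace[OF assms] .
  have sub: "submodule class_ring S (module_vec TYPE(real) n)" using vec_subspace_submodule[OF assms] .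
  have S: "S \<subseteq> carrier_vec n" using vec_subspace_carrier[OF assms] .
  let ?P = "\<lambda>T. T \<subseteq> carrier (subspace_vs n S) \<and> W.lin_indpt T"
  have bound: "finite T \<and> card T \<le> n" if "?P T" for T
  proof -
    have "T \<subseteq> S" using that by simp
    then have "V.lin_indpt T" using that V.span_li_not_depend(2)[OF _ sub] by auto
    then show ?thesis using V.li_le_dim[of T] \<open>T \<subseteq> S\<close> S V.dim_is_n by auto
  qed
  have "?P {}" unfolding W.lin_dep_def by auto
  then obtain A where "finite A" "maximal A ?P" using maximal_exists[of ?P n "{}"] bound by blast
  then have "W.gen_set A" using W.max_li_is_gen by blast
  then show ?thesis unfolding W.fin_dim_def using \<open>finite A\<close> \<open>maximal A ?P\<close> unfolding maximal_def by blast
qed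

lemma subspace_dim_mono:
  assumes S: "vec_subspace n S" and T: "vec_subspace n T" and "S \<subseteq> T"
  shows "subspace_dim n S \<le> subspace_dim n T"
proof -
  interpret V: vec_space "TYPE(real)" n .
  interpret WT: vectorspace class_ring "subspace_vs n T" using vec_subspace_vectorspace[OF T] .
  have "VectorSpace.subspace class_ring S (subspace_vs n T)"
    using V.nested_subspaces[of T S] S T \<open>S \<subseteq> T\<close> unfolding vec_subspace_def by auto
  from WT.subspace_dim[OF this] show ?thesis
    using vec_subspace_fin_dim[OF S] vec_subspace_fin_dim[OF T] unfolding subspace_dim_def by simp
qed

text \<open>A basis of \<open>S\<close> is independent in \<open>T\<close> and has \<open>dim T\<close> elements, so it is a basis of \<open>T\<close>.\<close>
lemma subspace_eq_if_subspace_dim_eq: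
  assumes S: "vec_subspace n S" and T: "vec_subspace n T" and "S \<subseteq> T"
    and dim_eq: "subspace_dim n S = subspace_dim n T"
  shows "S = T"
proof -
  interpret V: vec_space "TYPE(real)" n .
  interpret WT: vectorspace class_ring "subspace_vs n T" using vec_subspace_vectorspace[OF T] .
  interpret WS: vectorspace class_ring "subspace_vs n S" using vec_subspace_vectorspace[OF S] .
  obtain b where b: "finite b" "WS.basis b"
    using WS.finite_basis_exists vec_subspace_fin_dim[OF S] by blast
  have card_b: "card b = subspace_dim n T"
    using WS.dim_basis[OF b] dim_eq unfolding subspace_dim_def by simp
  have bS: "b \<subseteq> S" and span_S: "WS.span b = S" and "WS.lin_indpt b"
    using b(2) unfolding WS.basis_def by auto
  then have "V.lin_indpt b" using V.span_li_not_depend(2)[OF bS vec_subspace_submodule[OF S]] by simp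
  then have "WT.lin_indpt b"
    using V.span_li_not_depend(2)[of b T] bS \<open>S \<subseteq> T\<close> vec_subspace_submodule[OF T] by auto
  then have "WT.basis b"
    using WT.dim_li_is_basis vec_subspace_fin_dim[OF T] b(1) bS \<open>S \<subseteq> T\<close> card_b
    unfolding subspace_dim_def by auto
  then have "WT.span b = T" unfolding WT.basis_def by simp
  moreover have "WT.span b = V.span b" "WS.span b = V.span b"
    using V.span_li_not_depend(1) bS \<open>S \<subseteq> T\<close> vec_subspace_submodule[OF T] vec_subspace_submodule[OF S]
    by auto
  ultimately show ?thesis using span_S by simp
qed

lemma subspace_dim_eq_0_iff:
  assumes S: "vec_subspace n S"
  shows "subspace_dim n S = 0 \<longleftrightarrow> S = {0\<^sub>v n}"
proof -
  interpret V: vec_space "TYPE(real)" n .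
  have zero: "vspan n {} = {0\<^sub>v n}" using V.span_empty by simp
  have "subspace_dim n {0\<^sub>v n} = 0" using V.dim_zero_vs zero unfolding subspace_dim_def by simp
  moreover have "{0\<^sub>v n} \<subseteq> S"
    using vec_subspace_submodule[OF S] unfolding submodule_def by (auto simp: module_vec_simps)
  ultimately show ?thesis
    using subspace_eq_if_subspace_dim_eq[OF vec_subspace_span[of "{}" n, unfolded zero] S] by auto
qed

section \<open>Image, kernel and rank of real matrices\<close>

lemma mult_mat_vec_linear_map:
  assumes B: "B \<in> carrier_mat k m" and S: "vec_subspace m S"
  shows "linear_map class_ring (subspace_vs m S) (module_vec TYPE(real) k) (\<lambda>x. B *\<^sub>v x)"
proof -
  have S_carrier: "S \<subseteq> carrier_vec m" using vec_subspace_carrier[OF S] .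
  have "B *\<^sub>v (x + y) = B *\<^sub>v x + B *\<^sub>v y" if "x \<in> S" "y \<in> S" for x y
    using mult_add_distrib_mat_vec[OF B] that S_carrier by blast
  moreover have "B *\<^sub>v (c \<cdot>\<^sub>v x) = c \<cdot>\<^sub>v (B *\<^sub>v x)" if "x \<in> S" for c x
    using mult_mat_vec[OF B] that S_carrier by blast
  moreover have "B *\<^sub>v x \<in> carrier_vec k" if "x \<in> S" for x
    using mult_mat_vec_carrier[OF B] that S_carrier by blast
  ultimately have "(\<lambda>x. B *\<^sub>v x) \<in> LinearCombinations.module_hom class_ring (subspace_vs m S) (module_vec TYPE(real) k)"
    unfolding LinearCombinations.module_hom_def by (auto simp: module_vec_simps)
  then show ?thesis
    using vec_subspace_vectorspace[OF S] vec_vs[of k]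
    by (intro linear_map.intro mod_hom.intro mod_hom_axioms.intro) (auto simp: vectorspace_def)
qed

lemma vec_subspace_image:
  assumes "B \<in> carrier_mat k m" and "vec_subspace m S"
  shows "vec_subspace k ((\<lambda>x. B *\<^sub>v x) ` S)"
proof -
  interpret L: linear_map class_ring "subspace_vs m S" "module_vec TYPE(real) k" "\<lambda>x. B *\<^sub>v x"
    using mult_mat_vec_linear_map[OF assms] .
  show ?thesis using L.imT_is_subspace unfolding L.im_def vec_subspace_def by simp
qed

lemma rank_nullity_subspace:
  assumes "B \<in> carrier_mat k m" and S: "vec_subspace m S"
  shows "subspace_dim k ((\<lambda>x. B *\<^sub>v x) ` S) + subspace_dim m {x \<in> S. B *\<^sub>v x = 0\<^sub>v k}
    = subspace_dim m S"
proof -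
  interpret L: linear_map class_ring "subspace_vs m S" "module_vec TYPE(real) k" "\<lambda>x. B *\<^sub>v x"
    using mult_mat_vec_linear_map[OF assms] .
  have "L.im = (\<lambda>x. B *\<^sub>v x) ` S" unfolding L.im_def by simp
  moreover have "L.ker = {x \<in> S. B *\<^sub>v x = 0\<^sub>v k}" unfolding L.ker_def by (simp add: module_vec_simps)
  ultimately show ?thesis
    using L.rank_nullity[OF vec_subspace_fin_dim[OF S]] unfolding subspace_dim_def by simp
qed

lemma vec_subspace_mat_kernel:
  assumes B: "B \<in> carrier_mat k m"
  shows "vec_subspace m (mat_kernel B)"
proof -
  have "subspace_vs m (carrier_vec m) = module_vec TYPE(real) m" by (simp add: module_vec_def)
  then interpret L: linear_map class_ring "module_vec TYPE(real) m" "module_vec TYPE(real) k" "\<lambda>x. B *\<^sub>v x"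
    using mult_mat_vec_linear_map[OF B vec_subspace_carrier_vec] by metis
  have "L.ker = mat_kernel B" unfolding L.ker_def mat_kernel[OF B] by (simp add: module_vec_simps)
  then show ?thesis using L.kerT_is_subspace unfolding vec_subspace_def by simp
qed

lemma span_cols_eq_image:
  assumes B: "B \<in> carrier_mat k m"
  shows "vspan k (set (cols B)) = (\<lambda>x. B *\<^sub>v x) ` carrier_vec m"
proof -
  interpret V: vec_space "TYPE(real)" k .
  have "{y \<in> carrier_vec k. \<exists>x\<in>carrier_vec m. B *\<^sub>v x = y} = (\<lambda>x. B *\<^sub>v x) ` carrier_vec m"
    using mult_mat_vec_carrier[OF B] by blast
  then show "V.span (set (cols B)) = (\<lambda>x. B *\<^sub>v x) ` carrier_vec m"
    using V.col_space_eq[OF B] B unfolding V.col_space_def by simp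
qed

lemma mrank_eq_dim_span_cols: "mrank B = subspace_dim (dim_row B) (vspan (dim_row B) (set (cols B)))"
  unfolding mrank_def subspace_dim_def vec_space.rank_def by simp

lemma mrank_eq_dim_image:
  assumes B: "B \<in> carrier_mat k m"
  shows "mrank B = subspace_dim k ((\<lambda>x. B *\<^sub>v x) ` carrier_vec m)"
  using mrank_eq_dim_span_cols[of B] span_cols_eq_image[OF B] B by simp

lemma rank_nullity_mat:
  assumes B: "B \<in> carrier_mat k m"
  shows "mrank B + subspace_dim m (mat_kernel B) = m"
proof -
  have "{x \<in> carrier_vec m. B *\<^sub>v x = 0\<^sub>v k} = mat_kernel B"
    using mat_kernel[OF B] by blast
  then show ?thesis
    using rank_nullity_subspace[OF B vec_subspace_carrier_vec]
    unfolding mrank_eq_dim_image[OF B] subspace_dim_carrier_vec by simp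
qed

lemma mrank_mult_le:
  assumes X: "X \<in> carrier_mat k n" and Y: "Y \<in> carrier_mat n m"
  shows "mrank (X * Y) \<le> mrank X"
proof -
  have "(\<lambda>x. (X * Y) *\<^sub>v x) ` carrier_vec m \<subseteq> (\<lambda>x. X *\<^sub>v x) ` carrier_vec n"
    using X Y by (auto intro!: imageI mult_mat_vec_carrier)
  then show ?thesis
    unfolding mrank_eq_dim_image[OF X] mrank_eq_dim_image[OF mult_carrier_mat[OF X Y]]
    using subspace_dim_mono vec_subspace_image vec_subspace_carrier_vec X mult_carrier_mat[OF X Y]
    by metis
qed

lemma mat_kernel_transpose_mult_self:
  fixes B :: "real mat"
  assumes B: "B \<in> carrier_mat k m"
  shows "mat_kernel (transpose_mat B * B) = mat_kernel B"
proof
  have BtB: "transpose_mat B * B \<in> carrier_mat m m" using B by simp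
  show "mat_kernel B \<subseteq> mat_kernel (transpose_mat B * B)"
    by (rule mat_kernel_mult_subset[OF B]) (use B in simp)
  show "mat_kernel (transpose_mat B * B) \<subseteq> mat_kernel B"
  proof
    fix x assume "x \<in> mat_kernel (transpose_mat B * B)"
    then have x: "x \<in> carrier_vec m" and "(transpose_mat B * B) *\<^sub>v x = 0\<^sub>v m"
      using mat_kernelD[OF BtB] by auto
    then have "transpose_mat B *\<^sub>v (B *\<^sub>v x) = 0\<^sub>v m" using B by simp
    then have "(B *\<^sub>v x) \<bullet> (B *\<^sub>v x) = 0"
      using transpose_vec_mult_scalar[OF B x mult_mat_vec_carrier[OF B x]] x by simp
    then have "B *\<^sub>v x = 0\<^sub>v k" using conjugate_square_eq_0_vec[OF mult_mat_vec_carrier[OF B x]] by simp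
    then show "x \<in> mat_kernel B" using mat_kernelI[OF B x] by simp
  qed
qed

text \<open>The Gram trick: \<open>B\<^sup>T B\<close> and \<open>B\<close> have the same kernel, hence the same rank, and the
  image of \<open>B\<^sup>T B\<close> lies in that of \<open>B\<^sup>T\<close>.\<close>
lemma mrank_le_mrank_transpose:
  assumes B: "B \<in> carrier_mat k m"
  shows "mrank B \<le> mrank (transpose_mat B)"
proof -
  have "transpose_mat B * B \<in> carrier_mat m m" using B by simp
  then have "mrank (transpose_mat B * B) = mrank B"
    using rank_nullity_mat rank_nullity_mat[OF B] mat_kernel_transpose_mult_self[OF B] by (metis add_right_imp_eq)
  then show ?thesis using mrank_mult_le[of "transpose_mat B" m k B m] B by simp
qed

lemma mrank_transpose: "mrank (transpose_mat B) = mrank B"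
proof -
  have B: "B \<in> carrier_mat (dim_row B) (dim_col B)" by simp
  show ?thesis
    using mrank_le_mrank_transpose[OF B] mrank_le_mrank_transpose[of "transpose_mat B" "dim_col B" "dim_row B"]
    by simp
qed

section \<open>Solution sets of linear systems\<close>

definition solutions :: "real mat \<Rightarrow> real vec \<Rightarrow> real vec set" where
  "solutions B v = {w \<in> carrier_vec (dim_col B). B *\<^sub>v w = v}"

text \<open>Rouche-Capelli: both sides say that \<open>v\<close> lies in the column space of \<open>B\<close>.\<close>
lemma solutions_nonempty_iff_mrank_augment:
  assumes B: "B \<in> carrier_mat k m" and v: "v \<in> carrier_vec k"
  shows "solutions B v \<noteq> {} \<longleftrightarrow> mrank (augment B v) = mrank B"
proof -
  interpret V: vec_space "TYPE(real)" k .
  let ?C = "set (cols B)"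
  have C: "?C \<subseteq> carrier_vec k" using B cols_dim by blast
  have vC: "insert v ?C \<subseteq> carrier_vec k" using C v by simp
  have "cols (augment B v) = cols B @ [v]" "dim_row (augment B v) = k"
    unfolding augment_def using C v B by auto
  then have rank_aug: "mrank (augment B v) = subspace_dim k (V.span (insert v ?C))"
    using mrank_eq_dim_span_cols[of "augment B v"] by simp
  have rank_B: "mrank B = subspace_dim k (V.span ?C)"
    using mrank_eq_dim_span_cols[of B] B by simp
  have solvable_iff: "solutions B v \<noteq> {} \<longleftrightarrow> v \<in> V.span ?C"
    unfolding span_cols_eq_image[OF B] solutions_def using B by auto
  have span_le: "V.span ?C \<subseteq> V.span (insert v ?C)" using V.span_is_monotone[OF subset_insertI] .
  show ?thesis
  proof
    assume "solutions B v \<noteq> {}"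
    then have "insert v ?C \<subseteq> V.span ?C" using solvable_iff V.in_own_span[OF C] by simp
    then have "V.span (insert v ?C) \<subseteq> V.span ?C" by (rule V.span_subsetI[OF C])
    then have "V.span (insert v ?C) = V.span ?C" using span_le by (rule antisym)
    then show "mrank (augment B v) = mrank B" using rank_aug rank_B by simp
  next
    assume "mrank (augment B v) = mrank B"
    then have "subspace_dim k (V.span ?C) = subspace_dim k (V.span (insert v ?C))"
      unfolding rank_aug rank_B by (rule sym)
    then have "V.span ?C = V.span (insert v ?C)"
      by (rule subspace_eq_if_subspace_dim_eq[OF vec_subspace_span[OF C] vec_subspace_span[OF vC] span_le])
    moreover have "v \<in> V.span (insert v ?C)" using V.in_own_span[OF vC] by blast
    ultimately show "solutions B v \<noteq> {}" using solvable_iff by simp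
  qed
qed

lemma solutions_eq_translate_mat_kernel:
  assumes B: "B \<in> carrier_mat k m" and w0: "w0 \<in> solutions B v"
  shows "solutions B v = (\<lambda>x. w0 + x) ` mat_kernel B"
proof (intro equalityI subsetI)
  have w0: "w0 \<in> carrier_vec m" "B *\<^sub>v w0 = v" using w0 B unfolding solutions_def by auto
  fix w assume "w \<in> solutions B v"
  then have w: "w \<in> carrier_vec m" "B *\<^sub>v w = v" using B unfolding solutions_def by auto
  have "B *\<^sub>v (w - w0) = 0\<^sub>v k"
    using mult_minus_distrib_mat_vec[OF B w(1) w0(1)] w mult_mat_vec_carrier[OF B w0(1)] w0 by simp
  then have "w - w0 \<in> mat_kernel B" using mat_kernelI[OF B] w w0 by simp
  moreover have "w = w0 + (w - w0)" using w w0 by (intro eq_vecI) auto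
  ultimately show "w \<in> (\<lambda>x. w0 + x) ` mat_kernel B" by blast
next
  have w0: "w0 \<in> carrier_vec m" "B *\<^sub>v w0 = v" using w0 B unfolding solutions_def by auto
  fix w assume "w \<in> (\<lambda>x. w0 + x) ` mat_kernel B"
  then obtain x where x: "x \<in> carrier_vec m" "B *\<^sub>v x = 0\<^sub>v k" and w: "w = w0 + x"
    using mat_kernelD[OF B] by blast
  have "B *\<^sub>v w = v"
    unfolding w using mult_add_distrib_mat_vec[OF B w0(1) x(1)] x w0 mult_mat_vec_carrier[OF B w0(1)] by simp
  then show "w \<in> solutions B v" unfolding solutions_def w using w0 x B by simp
qed

lemma mat_kernel_eq_zero_iff_mrank:
  assumes B: "B \<in> carrier_mat k m"
  shows "mat_kernel B = {0\<^sub>v m} \<longleftrightarrow> mrank B = m"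
  using rank_nullity_mat[OF B] subspace_dim_eq_0_iff[OF vec_subspace_mat_kernel[OF B]] by auto

lemma infinite_mat_kernel:
  assumes B: "B \<in> carrier_mat k m" and "mrank B < m"
  shows "infinite (mat_kernel B)"
proof -
  have "B *\<^sub>v 0\<^sub>v m = 0\<^sub>v k" using B by (intro eq_vecI) (auto simp: scalar_prod_def)
  then have "0\<^sub>v m \<in> mat_kernel B" using mat_kernelI[OF B] by simp
  then obtain z where z: "z \<in> mat_kernel B" "z \<noteq> 0\<^sub>v m"
    using mat_kernel_eq_zero_iff_mrank[OF B] \<open>mrank B < m\<close> by blast
  have zc: "z \<in> carrier_vec m" using mat_kernelD[OF B z(1)] by simp
  have "\<exists>i<m. z $ i \<noteq> 0"
  proof (rule ccontr)
    assume "\<not> (\<exists>i<m. z $ i \<noteq> 0)"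
    then have "z = 0\<^sub>v m" using zc by (intro eq_vecI) auto
    with z(2) show False by simp
  qed
  then obtain i where i: "i < m" "z $ i \<noteq> 0" by blast
  have "inj (\<lambda>t::real. t \<cdot>\<^sub>v z)"
  proof (rule injI)
    fix t u :: real assume "t \<cdot>\<^sub>v z = u \<cdot>\<^sub>v z"
    then have "(t \<cdot>\<^sub>v z) $ i = (u \<cdot>\<^sub>v z) $ i" by simp
    then show "t = u" using i zc by simp
  qed
  then have "infinite (range (\<lambda>t::real. t \<cdot>\<^sub>v z))"
    using finite_imageD infinite_UNIV_char_0 by blast
  moreover have "range (\<lambda>t::real. t \<cdot>\<^sub>v z) \<subseteq> mat_kernel B"
    using mat_kernel_smult[OF B z(1)] by blast
  ultimately show ?thesis using finite_subset by blast
qed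

lemma solutions_eq_singleton:
  assumes B: "B \<in> carrier_mat k m" and w0: "w0 \<in> solutions B v" and "mrank B = m"
  shows "solutions B v = {w0}"
proof -
  have "mat_kernel B = {0\<^sub>v m}" using mat_kernel_eq_zero_iff_mrank[OF B] \<open>mrank B = m\<close> by simp
  moreover have "w0 + 0\<^sub>v m = w0" using w0 B unfolding solutions_def by simp
  ultimately show ?thesis unfolding solutions_eq_translate_mat_kernel[OF B w0] by simp
qed

lemma infinite_solutions:
  assumes B: "B \<in> carrier_mat k m" and w0: "w0 \<in> solutions B v" and "mrank B < m"
  shows "infinite (solutions B v)"
proof -
  have w0_carrier: "w0 \<in> carrier_vec m" using w0 B unfolding solutions_def by simp
  have "inj_on (\<lambda>x. w0 + x) (mat_kernel B)"
  proof (rule inj_onI)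
    fix x y assume "x \<in> mat_kernel B" "y \<in> mat_kernel B" and eq: "w0 + x = w0 + y"
    then have x: "x \<in> carrier_vec m" and y: "y \<in> carrier_vec m" using mat_kernelD(1)[OF B] by auto
    show "x = y"
    proof (rule eq_vecI)
      fix i assume "i < dim_vec y"
      then have "(w0 + x) $ i = (w0 + y) $ i" "i < m" using eq y by auto
      then show "x $ i = y $ i" using x y w0_carrier by simp
    qed (use x y in simp)
  qed
  then show ?thesis
    unfolding solutions_eq_translate_mat_kernel[OF B w0]
    using infinite_mat_kernel[OF B \<open>mrank B < m\<close>] finite_imageD by blast
qed

text \<open>Since \<open>ker A \<subseteq> ker (G A)\<close>, rank--nullity for \<open>A\<close> restricted to \<open>ker (G A)\<close> gives
  \<open>dim A(ker (G A)) = (m - rank (G A)) - (m - rank A)\<close>.\<close>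
lemma dim_image_mat_kernel_mult:
  assumes A: "A \<in> carrier_mat n m" and G: "G \<in> carrier_mat k n"
  shows "subspace_dim n ((\<lambda>x. A *\<^sub>v x) ` mat_kernel (G * A)) = mrank A - mrank (G * A)"
proof -
  have GA: "G * A \<in> carrier_mat k m" using A G by simp
  have "{x \<in> mat_kernel (G * A). A *\<^sub>v x = 0\<^sub>v n} = mat_kernel A"
    using mat_kernel_mult_subset[OF A G] mat_kernelD[OF A] mat_kernelD(1)[OF GA] mat_kernelI[OF A]
    by blast
  then have "subspace_dim n ((\<lambda>x. A *\<^sub>v x) ` mat_kernel (G * A)) + subspace_dim m (mat_kernel A)
      = subspace_dim m (mat_kernel (G * A))"
    using rank_nullity_subspace[OF A vec_subspace_mat_kernel[OF GA]] by argo
  then show ?thesis using rank_nullity_mat[OF A] rank_nullity_mat[OF GA] by linarith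
qed

lemma affine_subspace_of_dim_image_solutions:
  assumes A: "A \<in> carrier_mat n m" and G: "G \<in> carrier_mat k n" and w0: "w0 \<in> solutions (G * A) v"
  shows "affine_subspace_of_dim n ((\<lambda>w. A *\<^sub>v w) ` solutions (G * A) v) (mrank A - mrank (G * A))"
proof -
  have GA: "G * A \<in> carrier_mat k m" using A G by simp
  have w0_carrier: "w0 \<in> carrier_vec m" using w0 A unfolding solutions_def by simp
  let ?W = "(\<lambda>x. A *\<^sub>v x) ` mat_kernel (G * A)"
  have W: "vec_subspace n ?W" by (rule vec_subspace_image[OF A vec_subspace_mat_kernel[OF GA]])
  have "(\<lambda>w. A *\<^sub>v w) ` solutions (G * A) v = (\<lambda>u. A *\<^sub>v w0 + u) ` ?W"
    unfolding solutions_eq_translate_mat_kernel[OF GA w0] image_image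
    using mult_add_distrib_mat_vec[OF A w0_carrier] mat_kernelD(1)[OF GA] by (intro image_cong) auto
  then show ?thesis
    unfolding affine_subspace_of_dim_def
  proof (intro bexI[of _ "A *\<^sub>v w0"] exI[of _ ?W] conjI)
    show "VectorSpace.subspace class_ring ?W (module_vec TYPE(real) n)"
      using W unfolding vec_subspace_def .
    show "vectorspace.fin_dim class_ring (subspace_vs n ?W)" by (rule vec_subspace_fin_dim[OF W])
    show "vectorspace.dim class_ring (subspace_vs n ?W) = mrank A - mrank (G * A)"
      using dim_image_mat_kernel_mult[OF A G] unfolding subspace_dim_def .
    show "A *\<^sub>v w0 \<in> carrier_vec n" by (rule mult_mat_vec_carrier[OF A w0_carrier])
  qed
qed

section \<open>The matrix of difference-in-differences contrasts\<close>

lemma sum_diff_eq_choose_two: "(\<Sum>x\<in>{1..<Suc n}. n - x) = n choose 2"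
proof (induction n)
  case (Suc n)
  have "{1..<Suc (Suc n)} = insert (Suc n) {1..<Suc n}" by auto
  then have "(\<Sum>x\<in>{1..<Suc (Suc n)}. Suc n - x) = (\<Sum>x\<in>{1..<Suc n}. (n - x) + 1)"
    by (simp add: Suc_diff_le)
  also have "\<dots> = (\<Sum>x\<in>{1..<Suc n}. n - x) + (\<Sum>x\<in>{1..<Suc n}. 1)" by (rule sum.distrib)
  also have "\<dots> = (n choose 2) + n" unfolding Suc.IH by simp
  also have "\<dots> = Suc n choose 2" by (simp add: numeral_2_eq_2)
  finally show ?case .
qed simp

lemma length_concat_upper_pairs:
  assumes "\<And>x y. length (g x y) = c"
  shows "length (concat (map (\<lambda>x. concat (map (g x) [Suc x..<Suc n])) [1..<Suc n])) = (n choose 2) * c"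
proof -
  have "length (concat (map (\<lambda>x. concat (map (g x) [Suc x..<Suc n])) [1..<Suc n]))
      = (\<Sum>x\<leftarrow>[1..<Suc n]. (n - x) * c)"
    by (simp add: length_concat o_def assms sum_list_triv del: upt_Suc)
  also have "\<dots> = (\<Sum>x\<in>{1..<Suc n}. n - x) * c"
    by (simp add: sum_list_distinct_conv_sum_set sum_distrib_right del: upt_Suc)
  finally show ?thesis unfolding sum_diff_eq_choose_two .
qed

lemma quads_eq_concat:
  "quads N J = concat (map (\<lambda>i. concat (map (\<lambda>i'. concat (map (\<lambda>j. map (\<lambda>j'. (i, i', j, j'))
     [Suc j..<Suc J]) [1..<Suc J])) [Suc i..<Suc N])) [1..<Suc N])"
  unfolding quads_def by simp

lemma set_quads:
  "set (quads N J) = {(i, i', j, j'). 1 \<le> i \<and> i < i' \<and> i' \<le> N \<and> 1 \<le> j \<and> j < j' \<and> j' \<le> J}"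
  unfolding quads_eq_concat set_concat set_map
proof (auto simp del: upt_Suc)
  fix i i' j j' :: nat assume "Suc 0 \<le> i" "i < i'" "i' \<le> N" "Suc 0 \<le> j" "j < j'" "j' \<le> J"
  then show "\<exists>x\<in>{Suc 0..<Suc N}. \<exists>xa\<in>{Suc x..<Suc N}. \<exists>xb\<in>{Suc 0..<Suc J}.
    (i, i', j, j') \<in> (\<lambda>xc. (x, xa, xb, xc)) ` {Suc xb..<Suc J}"
    by (intro bexI[of _ i] bexI[of _ i'] bexI[of _ j]) auto
qed

lemma length_quads: "length (quads N J) = Mdim N J"
proof -
  have "length (concat (map (\<lambda>j. map (f j) [Suc j..<Suc J]) [1..<Suc J])) = J choose 2"
    for f :: "nat \<Rightarrow> nat \<Rightarrow> 'a"
    using length_concat_upper_pairs[of "\<lambda>j j'. [f j j']" 1 J] by (simp del: upt_Suc)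
  then show ?thesis unfolding quads_eq_concat Mdim_def by (intro length_concat_upper_pairs)
qed

lemma quads_nth:
  assumes "r < Mdim N J"
  obtains i i' j j' where "quads N J ! r = (i, i', j, j')"
    and "1 \<le> i" "i < i'" "i' \<le> N" "1 \<le> j" "j < j'" "j' \<le> J"
proof -
  have "quads N J ! r \<in> set (quads N J)" using assms length_quads by simp
  then show ?thesis using that unfolding set_quads by auto
qed

lemma cidx_iff:
  assumes "1 \<le> a" "1 \<le> b" "b \<le> J"
  shows "c = cidx J a b \<longleftrightarrow> c div J = a - 1 \<and> c mod J = b - 1"
proof
  assume "c = cidx J a b"
  then have "c = (b - 1) + (a - 1) * J" unfolding cidx_def by simp
  moreover have "b - 1 < J" using assms by simp
  ultimately show "c div J = a - 1 \<and> c mod J = b - 1" by simp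
next
  assume "c div J = a - 1 \<and> c mod J = b - 1"
  then show "c = cidx J a b" unfolding cidx_def by (metis add.commute div_mult_mod_eq)
qed

lemma cidx_less:
  assumes "1 \<le> a" "a \<le> N" "1 \<le> b" "b \<le> J"
  shows "cidx J a b < N * J"
proof -
  have "cidx J a b < (a - 1) * J + J" unfolding cidx_def using assms by simp
  also have "\<dots> = a * J" using assms by (cases a) auto
  also have "\<dots> \<le> N * J" using assms by simp
  finally show ?thesis .
qed

text \<open>The row of \<open>A\<close> belonging to the quadruple \<open>(1, a, 1, b)\<close>, as a function of the column.\<close>
definition base_contrast :: "nat \<Rightarrow> nat \<Rightarrow> nat \<Rightarrow> nat \<Rightarrow> real" where
  "base_contrast J a b c = (if c = cidx J 1 b then 1 else 0) + (if c = cidx J a 1 then 1 else 0)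
     - (if c = cidx J 1 1 then 1 else 0) - (if c = cidx J a b then 1 else 0)"

lemma base_contrast_1 [simp]:
  "base_contrast J 1 b c = 0" "base_contrast J a 1 c = 0"
  "base_contrast J (Suc 0) b c = 0" "base_contrast J a (Suc 0) c = 0"
  unfolding base_contrast_def by simp_all

lemma Amat_carrier: "Amat N J \<in> carrier_mat (Mdim N J) (N * J)"
  unfolding Amat_def by simp

lemma row_Amat:
  assumes r: "r < Mdim N J" and q: "quads N J ! r = (i, i', j, j')"
    and ij: "1 \<le> i" "i < i'" "i' \<le> N" "1 \<le> j" "j < j'" "j' \<le> J"
  shows "row (Amat N J) r = vec (N * J) (\<lambda>c. base_contrast J i j c + base_contrast J i' j' c
    - base_contrast J i j' c - base_contrast J i' j c)"
proof (rule eq_vecI)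
  fix c assume "c < dim_vec (vec (N * J) (\<lambda>c. base_contrast J i j c + base_contrast J i' j' c
    - base_contrast J i j' c - base_contrast J i' j c))"
  then have c: "c < N * J" by simp
  have "row (Amat N J) r $ c = (if c = cidx J i j' \<or> c = cidx J i' j then 1
      else if c = cidx J i j \<or> c = cidx J i' j' then -1 else 0)"
    unfolding Amat_def using r c q by simp
  then show "row (Amat N J) r $ c = vec (N * J) (\<lambda>c. base_contrast J i j c + base_contrast J i' j' c
    - base_contrast J i j' c - base_contrast J i' j c) $ c"
    using c ij by (simp add: base_contrast_def cidx_iff) arith
qed (simp add: Amat_def)

definition base_contrast_mat :: "nat \<Rightarrow> nat \<Rightarrow> real mat" where
  "base_contrast_mat N J = mat ((N - 1) * (J - 1)) (N * J)
     (\<lambda>(p, c). base_contrast J (p div (J - 1) + 2) (p mod (J - 1) + 2) c)"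

lemma base_contrast_mat_carrier: "base_contrast_mat N J \<in> carrier_mat ((N - 1) * (J - 1)) (N * J)"
  unfolding base_contrast_mat_def by simp

lemma row_base_contrast_mat:
  "p < (N - 1) * (J - 1) \<Longrightarrow>
    row (base_contrast_mat N J) p = vec (N * J) (base_contrast J (p div (J - 1) + 2) (p mod (J - 1) + 2))"
  unfolding base_contrast_mat_def by simp

lemma base_contrast_index_bounds:
  fixes p N J :: nat
  assumes "p < (N - 1) * (J - 1)"
  shows "2 \<le> p div (J - 1) + 2" "p div (J - 1) + 2 \<le> N" "2 \<le> p mod (J - 1) + 2" "p mod (J - 1) + 2 \<le> J"
proof -
  have "J - 1 > 0" using assms by (cases "J - 1") auto
  then have "p div (J - 1) < N - 1" "p mod (J - 1) < J - 1"
    using assms by (simp_all add: div_less_iff_less_mult)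
  then show "p div (J - 1) + 2 \<le> N" "p mod (J - 1) + 2 \<le> J" by simp_all
qed simp_all

lemma base_contrast_index:
  fixes a b N J :: nat
  assumes "2 \<le> a" "a \<le> N" "2 \<le> b" "b \<le> J"
  shows "(a - 2) * (J - 1) + (b - 2) < (N - 1) * (J - 1)"
    and "((a - 2) * (J - 1) + (b - 2)) div (J - 1) + 2 = a"
    and "((a - 2) * (J - 1) + (b - 2)) mod (J - 1) + 2 = b"
proof -
  have b: "b - 2 < J - 1" using assms by simp
  then have "(a - 2) * (J - 1) + (b - 2) < (a - 2) * (J - 1) + (J - 1)" by simp
  also have "\<dots> = (a - 1) * (J - 1)"
  proof -
    have "a - 1 = Suc (a - 2)" using assms by simp
    then show ?thesis by simp
  qed
  also have "\<dots> \<le> (N - 1) * (J - 1)" using assms by simp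
  finally show "(a - 2) * (J - 1) + (b - 2) < (N - 1) * (J - 1)" .
  have "((a - 2) * (J - 1) + (b - 2)) div (J - 1) = a - 2"
    "((a - 2) * (J - 1) + (b - 2)) mod (J - 1) = b - 2"
    using b by simp_all
  then show "((a - 2) * (J - 1) + (b - 2)) div (J - 1) + 2 = a"
    "((a - 2) * (J - 1) + (b - 2)) mod (J - 1) + 2 = b"
    using assms by arith+
qed

lemma rows_base_contrast_mat_subset: "set (rows (base_contrast_mat N J)) \<subseteq> set (rows (Amat N J))"
proof
  fix x assume "x \<in> set (rows (base_contrast_mat N J))"
  then obtain p where p: "p < (N - 1) * (J - 1)" and x: "x = row (base_contrast_mat N J) p"
    using base_contrast_mat_carrier[of N J] unfolding rows_def by auto
  define a where "a = p div (J - 1) + 2"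
  define b where "b = p mod (J - 1) + 2"
  have ab: "2 \<le> a" "a \<le> N" "2 \<le> b" "b \<le> J"
    using base_contrast_index_bounds[OF p] unfolding a_def b_def by auto
  then have "(1, a, 1, b) \<in> set (quads N J)" unfolding set_quads by auto
  then obtain r where r: "r < Mdim N J" and q: "quads N J ! r = (1, a, 1, b)"
    by (metis in_set_conv_nth length_quads)
  have "row (Amat N J) r = vec (N * J) (base_contrast J a b)"
    using row_Amat[OF r q] ab by (intro eq_vecI) auto
  moreover have "x = vec (N * J) (base_contrast J a b)"
    unfolding x row_base_contrast_mat[OF p] a_def b_def ..
  moreover have "row (Amat N J) r \<in> set (rows (Amat N J))"
    using r unfolding rows_def Amat_def by simp
  ultimately show "x \<in> set (rows (Amat N J))" by simp
qed

lemma base_contrast_in_span: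
  assumes "1 \<le> a" "a \<le> N" "1 \<le> b" "b \<le> J"
  shows "vec (N * J) (base_contrast J a b) \<in> vspan (N * J) (set (rows (base_contrast_mat N J)))"
proof -
  interpret V: vec_space "TYPE(real)" "N * J" .
  have rows: "set (rows (base_contrast_mat N J)) \<subseteq> carrier_vec (N * J)"
    using set_rows_carrier[OF base_contrast_mat_carrier] by blast
  show ?thesis
  proof (cases "a = 1 \<or> b = 1")
    case True
    then have "vec (N * J) (base_contrast J a b) = 0\<^sub>v (N * J)"
      by (intro eq_vecI) (auto simp: base_contrast_def)
    then show ?thesis using vectorspace.span_zero[OF vec_vs] by (simp add: module_vec_simps)
  next
    case False
    then have ab: "2 \<le> a" "2 \<le> b" using assms by auto
    define p where "p = (a - 2) * (J - 1) + (b - 2)"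
    have p: "p < (N - 1) * (J - 1)" "p div (J - 1) + 2 = a" "p mod (J - 1) + 2 = b"
      unfolding p_def using base_contrast_index ab assms by auto
    have "vec (N * J) (base_contrast J a b) = row (base_contrast_mat N J) p"
      using row_base_contrast_mat[OF p(1)] p by simp
    also have "\<dots> \<in> set (rows (base_contrast_mat N J))"
      using p(1) unfolding rows_def base_contrast_mat_def by simp
    finally show ?thesis using V.in_own_span[OF rows] by blast
  qed
qed

lemma rows_Amat_subset_span: "set (rows (Amat N J)) \<subseteq> vspan (N * J) (set (rows (base_contrast_mat N J)))"
proof
  interpret V: vec_space "TYPE(real)" "N * J" .
  have rows: "set (rows (base_contrast_mat N J)) \<subseteq> carrier_vec (N * J)"
    using set_rows_carrier[OF base_contrast_mat_carrier] by blast
  fix x assume "x \<in> set (rows (Amat N J))"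
  then obtain r where r: "r < Mdim N J" and x: "x = row (Amat N J) r"
    unfolding rows_def Amat_def by auto
  obtain i i' j j' where q: "quads N J ! r = (i, i', j, j')"
    and ij: "1 \<le> i" "i < i'" "i' \<le> N" "1 \<le> j" "j < j'" "j' \<le> J"
    using quads_nth[OF r] by blast
  let ?R = "\<lambda>a b. vec (N * J) (base_contrast J a b)"
  have "x = ?R i j + ?R i' j' + (-1) \<cdot>\<^sub>v ?R i j' + (-1) \<cdot>\<^sub>v ?R i' j"
    unfolding x row_Amat[OF r q ij] by (intro eq_vecI) auto
  moreover have "?R i j \<in> V.span (set (rows (base_contrast_mat N J)))"
    "?R i' j' \<in> V.span (set (rows (base_contrast_mat N J)))"
    "?R i j' \<in> V.span (set (rows (base_contrast_mat N J)))"
    "?R i' j \<in> V.span (set (rows (base_contrast_mat N J)))"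
    using ij by (auto intro!: base_contrast_in_span)
  ultimately show "x \<in> V.span (set (rows (base_contrast_mat N J)))"
    using V.span_add1[OF rows] V.smult_in_span[OF rows] by simp
qed

text \<open>For \<open>a, b \<ge> 2\<close> the cell \<open>(a, b)\<close> occurs in no base contrast but its own; this is
  why the base contrasts with \<open>a, b \<ge> 2\<close> are independent.\<close>
lemma base_contrast_cidx:
  assumes ab: "2 \<le> a" "2 \<le> b" "b \<le> J" and ab': "2 \<le> a'" "2 \<le> b'" "b' \<le> J"
  shows "base_contrast J a' b' (cidx J a b) = (if a' = a \<and> b' = b then -1 else 0)"
proof -
  define c where "c = cidx J a b"
  have "c div J = a - 1" "c mod J = b - 1" using cidx_iff[of a b J c] ab unfolding c_def by auto
  then show ?thesis
    unfolding c_def[symmetric] base_contrast_def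
    using cidx_iff[of 1 b' J c] cidx_iff[of a' 1 J c] cidx_iff[of 1 1 J c] cidx_iff[of a' b' J c] ab ab'
    by auto
qed

lemma col_base_contrast_mat:
  assumes p: "p < (N - 1) * (J - 1)"
  shows "col (base_contrast_mat N J) (cidx J (p div (J - 1) + 2) (p mod (J - 1) + 2))
    = (-1) \<cdot>\<^sub>v unit_vec ((N - 1) * (J - 1)) p"
proof (rule eq_vecI)
  let ?a = "p div (J - 1) + 2" and ?b = "p mod (J - 1) + 2"
  have c: "cidx J ?a ?b < N * J"
    using cidx_less base_contrast_index_bounds[OF p] by (metis le_trans one_le_numeral)
  fix q assume "q < dim_vec ((-1) \<cdot>\<^sub>v unit_vec ((N - 1) * (J - 1)) p)"
  then have q: "q < (N - 1) * (J - 1)" by simp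
  have "q div (J - 1) = p div (J - 1) \<and> q mod (J - 1) = p mod (J - 1) \<longleftrightarrow> q = p"
    by (metis div_mult_mod_eq)
  then have "base_contrast J (q div (J - 1) + 2) (q mod (J - 1) + 2) (cidx J ?a ?b)
      = (if q = p then -1 else 0)"
    using base_contrast_cidx base_contrast_index_bounds[OF p] base_contrast_index_bounds[OF q] by simp
  then show "col (base_contrast_mat N J) (cidx J ?a ?b) $ q = ((-1) \<cdot>\<^sub>v unit_vec ((N - 1) * (J - 1)) p) $ q"
    unfolding base_contrast_mat_def using c p q by simp
qed (simp add: base_contrast_mat_def)

lemma span_cols_base_contrast_mat:
  "vspan ((N - 1) * (J - 1)) (set (cols (base_contrast_mat N J))) = carrier_vec ((N - 1) * (J - 1))"
proof -
  let ?k = "(N - 1) * (J - 1)" and ?P = "base_contrast_mat N J"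
  interpret V: vec_space "TYPE(real)" ?k .
  have cols: "set (cols ?P) \<subseteq> carrier_vec ?k"
    using cols_dim[of ?P] base_contrast_mat_carrier[of N J] by simp
  have "set (unit_vecs ?k) \<subseteq> V.span (set (cols ?P))"
  proof
    fix u :: "real vec" assume "u \<in> set (unit_vecs ?k)"
    then obtain p where p: "p < ?k" and u: "u = unit_vec ?k p" unfolding unit_vecs_def by auto
    let ?c = "cidx J (p div (J - 1) + 2) (p mod (J - 1) + 2)"
    have "?c < N * J"
      using cidx_less base_contrast_index_bounds[OF p] by (metis le_trans one_le_numeral)
    then have "col ?P ?c \<in> set (cols ?P)" using base_contrast_mat_carrier[of N J] unfolding cols_def by simp
    then have "col ?P ?c \<in> V.span (set (cols ?P))" using V.in_own_span[OF cols] by blast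
    then have "(-1) \<cdot>\<^sub>v col ?P ?c \<in> V.span (set (cols ?P))" by (rule V.smult_in_span[OF cols])
    moreover have "u = (-1) \<cdot>\<^sub>v col ?P ?c"
      unfolding col_base_contrast_mat[OF p] u by (intro eq_vecI) auto
    ultimately show "u \<in> V.span (set (cols ?P))" by simp
  qed
  then have "carrier_vec ?k \<subseteq> V.span (set (cols ?P))"
    using V.span_subsetI[OF cols] V.span_unit_vecs_is_carrier by metis
  moreover have "V.span (set (cols ?P)) \<subseteq> carrier_vec ?k" using V.span_is_subset2[OF cols] .
  ultimately show ?thesis by (rule antisym[rotated])
qed

lemma mrank_Amat: "mrank (Amat N J) = (N - 1) * (J - 1)"
proof -
  let ?k = "(N - 1) * (J - 1)" and ?P = "base_contrast_mat N J"
  interpret V: vec_space "TYPE(real)" "N * J" .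
  have rows: "set (rows ?P) \<subseteq> carrier_vec (N * J)"
    using set_rows_carrier[OF base_contrast_mat_carrier] by blast
  have "V.span (set (rows (Amat N J))) \<subseteq> V.span (set (rows ?P))"
    by (rule V.span_subsetI[OF rows rows_Amat_subset_span])
  moreover have "V.span (set (rows ?P)) \<subseteq> V.span (set (rows (Amat N J)))"
    by (rule V.span_is_monotone[OF rows_base_contrast_mat_subset])
  ultimately have span_eq: "V.span (set (cols (transpose_mat (Amat N J))))
      = V.span (set (cols (transpose_mat ?P)))"
    unfolding cols_transpose by (rule antisym)
  have "mrank (Amat N J) = mrank (transpose_mat (Amat N J))" by (rule mrank_transpose[symmetric])
  also have "\<dots> = mrank (transpose_mat ?P)"
    using mrank_eq_dim_span_cols[of "transpose_mat (Amat N J)"] mrank_eq_dim_span_cols[of "transpose_mat ?P"]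
      span_eq by (simp add: Amat_def base_contrast_mat_def)
  also have "\<dots> = mrank ?P" by (rule mrank_transpose)
  also have "\<dots> = subspace_dim ?k (vspan ?k (set (cols ?P)))"
    using mrank_eq_dim_span_cols[of ?P] base_contrast_mat_carrier[of N J] by simp
  also have "\<dots> = ?k" unfolding span_cols_base_contrast_mat subspace_dim_carrier_vec ..
  finally show ?thesis .
qed

section \<open>Unbiased estimators\<close>

lemma Gmat_carrier: "Gmat s N J X \<in> carrier_mat (N * J) (Kdim s N J X)"
  unfolding Gmat_def by simp

lemma Fmat_carrier: "Fmat s N J X \<in> carrier_mat (Mdim N J) (Kdim s N J X)"
  unfolding Fmat_def using Amat_carrier Gmat_carrier by (rule mult_carrier_mat)

lemma transpose_Fmat:
  "transpose_mat (Fmat s N J X) = transpose_mat (Gmat s N J X) * transpose_mat (Amat N J)"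
  unfolding Fmat_def using Amat_carrier Gmat_carrier by (rule transpose_mult)

lemma unbiased_iff_mem_solutions:
  "unbiased s N J X v w \<longleftrightarrow> w \<in> solutions (transpose_mat (Fmat s N J X)) v"
  using Fmat_carrier[of s N J X] unfolding unbiased_def solutions_def by auto

theorem theorem3:
  fixes N J :: nat and X :: "nat \<Rightarrow> nat \<Rightarrow> bool" and s :: setting and v :: "real vec"
  assumes "N \<ge> 2" and "J \<ge> 2"
    and "staggered N J X" and "units_ordered N J X"
    and "v \<in> carrier_vec (Kdim s N J X)"
  shows
   "(mrank (augment (transpose_mat (Fmat s N J X)) v) > mrank (transpose_mat (Fmat s N J X))
       \<longrightarrow> \<not> (\<exists>w. unbiased s N J X v w))
  \<and> (mrank (augment (transpose_mat (Fmat s N J X)) v) = mrank (transpose_mat (Fmat s N J X))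
     \<and> mrank (transpose_mat (Fmat s N J X)) = Mdim N J
       \<longrightarrow> (\<exists>!w. unbiased s N J X v w)
         \<and> (\<exists>!e. \<exists>w. unbiased s N J X v w \<and> e = transpose_mat (Amat N J) *\<^sub>v w))
  \<and> (mrank (augment (transpose_mat (Fmat s N J X)) v) = mrank (transpose_mat (Fmat s N J X))
     \<and> mrank (transpose_mat (Fmat s N J X)) < Mdim N J
       \<longrightarrow> infinite {w. unbiased s N J X v w}
         \<and> affine_subspace_of_dim (N * J)
              {transpose_mat (Amat N J) *\<^sub>v w | w. unbiased s N J X v w}
              ((N - 1) * (J - 1) - mrank (Fmat s N J X)))"
proof -
  let ?A = "transpose_mat (Amat N J)" and ?G = "transpose_mat (Gmat s N J X)"
  let ?F = "transpose_mat (Fmat s N J X)"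
  let ?S = "solutions ?F v" and ?U = "{w. unbiased s N J X v w}"
  have A: "?A \<in> carrier_mat (N * J) (Mdim N J)" using Amat_carrier by simp
  have G: "?G \<in> carrier_mat (Kdim s N J X) (N * J)" using Gmat_carrier by simp
  have F: "?F \<in> carrier_mat (Kdim s N J X) (Mdim N J)" using Fmat_carrier by simp
  have U: "?U = ?S" unfolding unbiased_iff_mem_solutions by simp
  have solvable: "?S \<noteq> {} \<longleftrightarrow> mrank (augment ?F v) = mrank ?F"
    by (rule solutions_nonempty_iff_mrank_augment[OF F assms(5)])
  have estimators: "(\<lambda>w. ?A *\<^sub>v w) ` solutions (?G * ?A) v = {?A *\<^sub>v w | w. unbiased s N J X v w}"
    unfolding U[unfolded transpose_Fmat, symmetric] by blast
  have dim: "mrank ?A - mrank (?G * ?A) = (N - 1) * (J - 1) - mrank (Fmat s N J X)"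
    unfolding transpose_Fmat[symmetric] mrank_transpose mrank_Amat ..
  show ?thesis
  proof (intro conjI impI)
    assume "mrank (augment ?F v) > mrank ?F"
    then have "?S = {}" using solvable by simp
    then show "\<not> (\<exists>w. unbiased s N J X v w)" unfolding unbiased_iff_mem_solutions by simp
  next
    assume rank: "mrank (augment ?F v) = mrank ?F \<and> mrank ?F = Mdim N J"
    then obtain w0 where w0: "w0 \<in> ?S" using solvable by auto
    have "unbiased s N J X v w \<longleftrightarrow> w = w0" for w
      using solutions_eq_singleton[OF F w0] rank unfolding unbiased_iff_mem_solutions by simp
    then show "\<exists>!w. unbiased s N J X v w" "\<exists>!e. \<exists>w. unbiased s N J X v w \<and> e = ?A *\<^sub>v w"
      by auto
  next
    assume rank: "mrank (augment ?F v) = mrank ?F \<and> mrank ?F < Mdim N J"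
    then obtain w0 where w0: "w0 \<in> ?S" using solvable by auto
    show "infinite ?U" unfolding U using infinite_solutions[OF F w0] rank by simp
  next
    assume "mrank (augment ?F v) = mrank ?F \<and> mrank ?F < Mdim N J"
    then obtain w0 where "w0 \<in> solutions (?G * ?A) v" using solvable unfolding transpose_Fmat by auto
    from affine_subspace_of_dim_image_solutions[OF A G this]
    show "affine_subspace_of_dim (N * J) {?A *\<^sub>v w | w. unbiased s N J X v w}
        ((N - 1) * (J - 1) - mrank (Fmat s N J X))"
      unfolding dim estimators .
  qed
qed

end
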